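(* Let $m\ge n\ge o\ge 0$ be integers with $m+n+o\ge 4$ such that the complete tripartite graph $K_{m,n,o}$ is connected. Let the vertices of the parts of sizes $m,n,o$ carry the indeterminates $x_1,\dots,x_m$, $y_1,\dots,y_n$, $z_1,\dots,z_o$ respectively. Then the third critical ideal $I_3=I_3(K_{m,n,o},\{X,Y,Z\})\subseteq\mathbb{Z}[x_1,\dots,x_m,y_1,\dots,y_n,z_1,\dots,z_o]$ is: - $\langle 2, x_1,\dots,x_m, y_1,\dots,y_n, z_1,\dots,z_o\rangle$ if $m,n,o\ge 2$; - $\langle x_1,\dots,x_m, y_1,\dots,y_n, z_1+2\rangle$ if $m\ge2$, $n\ge 2$, $o=1$; - $\langle x_1,\dots,x_m, y_1+z_1+2\rangle$ if $m\ge 3$, $n=1$, $o=1$; - $\langle x_1x_2+x_1+x_2,\ x_1z_1+x_1,\ x_2z_1+x_2,\ y_1+z_1+2\rangle$ if $m=2$, $n=1$, $o=1$; - $\langle x_1,\dots,x_m, y_1,\dots,y_n\rangle$ if $m\ge 3$, $n\ge 3$, $o=0$; - $\langle x_1,\dots,x_m, y_1+y_2\rangle$ if $m\ge 3$, $n=2$, $o=0$; - $\langle x_2y_2,\ x_1+x_2,\ y_1+y_2\rangle$ if $m=2$, $n=2$, $o=0$; - $\langle x_1,\dots,x_m\rangle$ if $m\ge 3$, $n=1$, $o=0$.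
   Context: For a finite graph $G$ with an indeterminate $x_u$ for each vertex $u$, the generalized Laplacian matrix $L(G,X_G)$ is the matrix indexed by $V(G)$ with $(u,u)$-entry $x_u$ and $(u,v)$-entry $-m_{uv}$ for $u\ne v$, $m_{uv}$ being the number of edges between $u$ and $v$. The third critical ideal $I_3(G,X_G)$ is the ideal of $\mathbb{Z}[X_G]$ generated by all $3\times 3$ minors of $L(G,X_G)$. $K_{m,n,o}$ is the complete tripartite graph with parts of sizes $m,n,o$ (for $o=0$ it is the complete bipartite graph $K_{m,n}$). *)

theory Defs
  imports "HOL-Library.Poly_Mapping" "Jordan_Normal_Form.Determinant" "Jordan_Normal_Form.DL_Submatrix"
begin

type_synonym zpoly = "(nat \<Rightarrow>\<^sub>0 nat) \<Rightarrow>\<^sub>0 int"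

definition Var :: "nat \<Rightarrow> zpoly" where
  "Var i = Poly_Mapping.single (Poly_Mapping.single i 1) 1"

definition ideal_generated :: "'a::comm_ring_1 set \<Rightarrow> 'a set" where
  "ideal_generated S = {p. \<exists>F c. finite F \<and> F \<subseteq> S \<and> p = (\<Sum>g\<in>F. c g * g)}"

text \<open>A multigraph on vertex set {0..<N} given by the edge multiplicity function mu.\<close>
definition graph_connected :: "nat \<Rightarrow> (nat \<Rightarrow> nat \<Rightarrow> nat) \<Rightarrow> bool" where
  "graph_connected N mu \<longleftrightarrow>
     (\<forall>u<N. \<forall>v<N. (u, v) \<in> {(a, b). a < N \<and> b < N \<and> a \<noteq> b \<and> mu a b > 0}\<^sup>*)"

definition gen_laplacian :: "nat \<Rightarrow> (nat \<Rightarrow> nat \<Rightarrow> nat) \<Rightarrow> zpoly mat" where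
  "gen_laplacian N mu = mat N N (\<lambda>(u, v). if u = v then Var u else - of_nat (mu u v))"

definition critical_ideal :: "nat \<Rightarrow> zpoly mat \<Rightarrow> zpoly set" where
  "critical_ideal k A = ideal_generated
     {det (submatrix A I J) | I J. I \<subseteq> {..<dim_row A} \<and> J \<subseteq> {..<dim_col A}
                                 \<and> card I = k \<and> card J = k}"

text \<open>Complete tripartite graph K_{m,n,p} on {0..<m+n+p}: vertices 0..m-1 form the
first part, m..m+n-1 the second, m+n..m+n+p-1 the third.\<close>
definition tri_part :: "nat \<Rightarrow> nat \<Rightarrow> nat \<Rightarrow> nat" where
  "tri_part m n i = (if i < m then 0 else if i < m + n then 1 else 2)"

definition tri_mult :: "nat \<Rightarrow> nat \<Rightarrow> nat \<Rightarrow> nat \<Rightarrow> nat" where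
  "tri_mult m n u v = (if tri_part m n u \<noteq> tri_part m n v then 1 else 0)"

text \<open>Indeterminates: x_i = Var (i-1), y_j = Var (m+j-1), z_k = Var (m+n+k-1) (1-based).\<close>
definition xv :: "nat \<Rightarrow> zpoly" where "xv i = Var (i - 1)"
definition yv :: "nat \<Rightarrow> nat \<Rightarrow> zpoly" where "yv m j = Var (m + j - 1)"
definition zv :: "nat \<Rightarrow> nat \<Rightarrow> nat \<Rightarrow> zpoly" where "zv m n k = Var (m + n + k - 1)"

end

theory Submission
  imports Defs
begin

text \<open>
  Modulo the proposed ideal \<open>J\<close>, the generalized Laplacian of \<open>K_{m,n,o}\<close> becomes
  constant on the blocks of a partition of the vertices into at most three classes: a vertex
  in a part with at least two vertices gets diagonal entry \<open>0\<close>, like the zero entries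
  between distinct vertices of its part.  Entrywise congruent matrices have congruent minors,
  and a \<open>3 \<times> 3\<close> minor of a block-constant matrix vanishes when two of its rows or columns
  lie in the same class and is otherwise \<open>\<plusminus>\<close> the determinant of the \<open>3 \<times> 3\<close> matrix of
  block values, which lies in \<open>J\<close>.  Conversely every generator of \<open>J\<close> is, up to sign, an
  explicit \<open>3 \<times> 3\<close> minor.  On four vertices the reduction to blocks is too coarse, and the
  sixteen minors are written out as combinations of the generators.
\<close>

section \<open>Ideals generated by a set\<close>

interpretation ring_module: Modules.module "(*) :: 'a::comm_ring_1 \<Rightarrow> 'a \<Rightarrow> 'a"
  by standard (simp_all add: algebra_simps)

declare ring_module.scale_scale [simp del]
  \<comment> \<open>it reverses \<open>mult.assoc\<close> and loops with \<open>algebra_simps\<close>\<close>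

lemma ideal_generated_eq_span: "ideal_generated S = ring_module.span S"
  unfolding ideal_generated_def ring_module.span_explicit by auto

lemmas ideal_generated_base = ring_module.span_base[folded ideal_generated_eq_span]
  and ideal_generated_zero = ring_module.span_zero[folded ideal_generated_eq_span]
  and ideal_generated_add = ring_module.span_add[folded ideal_generated_eq_span]
  and ideal_generated_mult = ring_module.span_scale[folded ideal_generated_eq_span]
  and ideal_generated_sum = ring_module.span_sum[folded ideal_generated_eq_span]

lemma ideal_generated_minus_iff: "- x \<in> ideal_generated S \<longleftrightarrow> x \<in> ideal_generated S"
  unfolding ideal_generated_eq_span using ring_module.span_neg by fastforce

lemma ideal_generated_subset:
  "S \<subseteq> ideal_generated T \<Longrightarrow> ideal_generated S \<subseteq> ideal_generated T"
  unfolding ideal_generated_eq_span by (rule ring_module.span_minimal) simp_all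

lemma sum_list_map2_mult_mem_ideal_generated:
  "set gs \<subseteq> S \<Longrightarrow> sum_list (map2 (*) qs gs) \<in> ideal_generated S"
proof (induction gs arbitrary: qs)
  case (Cons g gs)
  then show ?case
    by (cases qs)
      (auto intro!: ideal_generated_add ideal_generated_mult[OF ideal_generated_base]
        simp: ideal_generated_zero)
qed (simp add: ideal_generated_zero)

lemma prod_diff_mem_ideal_generated:
  assumes "\<And>i. i \<in> A \<Longrightarrow> f i - g i \<in> ideal_generated S"
  shows "prod f A - prod g A \<in> ideal_generated S"
  using assms
proof (induction A rule: infinite_finite_induct)
  case (insert a A)
  have "prod f (insert a A) - prod g (insert a A) = f a * (prod f A - prod g A) + prod g A * (f a - g a)"
    using insert.hyps by (simp add: algebra_simps)
  then show ?case using insert by (auto intro!: ideal_generated_add ideal_generated_mult)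
qed (simp_all add: ideal_generated_zero)

lemma det_diff_mem_ideal_generated:
  assumes A: "A \<in> carrier_mat n n" and B: "B \<in> carrier_mat n n"
    and cong: "\<And>i j. i < n \<Longrightarrow> j < n \<Longrightarrow> A $$ (i, j) - B $$ (i, j) \<in> ideal_generated S"
  shows "det A - det B \<in> ideal_generated S"
proof -
  have "signof p * (\<Prod>i = 0..<n. A $$ (i, p i)) - signof p * (\<Prod>i = 0..<n. B $$ (i, p i))
      \<in> ideal_generated S" if "p permutes {0..<n}" for p
    unfolding right_diff_distrib[symmetric]
    by (intro ideal_generated_mult prod_diff_mem_ideal_generated cong)
       (use permutes_in_image[OF that] in auto)
  then show ?thesis
    unfolding det_def'[OF A] det_def'[OF B] sum_subtractf[symmetric]
    by (intro ideal_generated_sum) blast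
qed

lemma critical_ideal_subset_of_cong:
  assumes A: "A \<in> carrier_mat N N" and E: "E \<in> carrier_mat N N"
    and cong: "\<And>i j. i < N \<Longrightarrow> j < N \<Longrightarrow> A $$ (i, j) - E $$ (i, j) \<in> ideal_generated S"
    and E_le: "critical_ideal k E \<subseteq> ideal_generated S"
  shows "critical_ideal k A \<subseteq> ideal_generated S"
  unfolding critical_ideal_def
proof (rule ideal_generated_subset, rule subsetI)
  fix x assume "x \<in> {det (submatrix A I J) | I J. I \<subseteq> {..<dim_row A} \<and> J \<subseteq> {..<dim_col A}
                                                \<and> card I = k \<and> card J = k}"
  then obtain I J where x: "x = det (submatrix A I J)"
    and IJ: "I \<subseteq> {..<N}" "J \<subseteq> {..<N}" "card I = k" "card J = k"
    using A by auto
  have rows: "{i. i < N \<and> i \<in> I} = I" and cols: "{j. j < N \<and> j \<in> J} = J"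
    using IJ by auto
  have "det (submatrix E I J) \<in> critical_ideal k E"
    unfolding critical_ideal_def using E IJ by (intro ideal_generated_base) auto
  moreover have "det (submatrix A I J) - det (submatrix E I J) \<in> ideal_generated S"
  proof (rule det_diff_mem_ideal_generated)
    show "submatrix A I J \<in> carrier_mat k k" "submatrix E I J \<in> carrier_mat k k"
      using A E IJ by (auto simp: dim_submatrix rows cols)
    show "submatrix A I J $$ (i, j) - submatrix E I J $$ (i, j) \<in> ideal_generated S"
      if "i < k" "j < k" for i j
      using that A E IJ pick_le[of i N I] pick_le[of j N J]
      by (auto simp: submatrix_index rows cols intro!: cong)
  qed
  ultimately show "x \<in> ideal_generated S"
    unfolding x using E_le ideal_generated_add by fastforce
qed

lemma critical_ideal_eqI:
  assumes "critical_ideal k A \<subseteq> ideal_generated S" "S \<subseteq> critical_ideal k A"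
  shows "critical_ideal k A = ideal_generated S"
proof
  show "ideal_generated S \<subseteq> critical_ideal k A"
    using assms(2) unfolding critical_ideal_def by (rule ideal_generated_subset)
qed (fact assms(1))

section \<open>Minors of order three\<close>

definition minor3 ::
  "(nat \<Rightarrow> nat \<Rightarrow> 'a::comm_ring_1) \<Rightarrow> nat \<Rightarrow> nat \<Rightarrow> nat \<Rightarrow> nat \<Rightarrow> nat \<Rightarrow> nat \<Rightarrow> 'a"
where
  "minor3 f r1 r2 r3 c1 c2 c3 =
     f r1 c1 * f r2 c2 * f r3 c3 - f r1 c1 * f r2 c3 * f r3 c2 - f r1 c2 * f r2 c1 * f r3 c3
   + f r1 c2 * f r2 c3 * f r3 c1 + f r1 c3 * f r2 c1 * f r3 c2 - f r1 c3 * f r2 c2 * f r3 c1"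

lemma minor3_transpose: "minor3 f r1 r2 r3 c1 c2 c3 = minor3 (\<lambda>i j. f j i) c1 c2 c3 r1 r2 r3"
  unfolding minor3_def by (simp add: algebra_simps)

lemma minor3_eq_0_of_rows:
  "r1 = r2 \<or> r2 = r3 \<or> r1 = r3 \<Longrightarrow> minor3 f r1 r2 r3 c1 c2 c3 = 0"
  unfolding minor3_def by (elim disjE) (simp_all add: algebra_simps)

lemma minor3_eq_0_of_cols:
  "c1 = c2 \<or> c2 = c3 \<or> c1 = c3 \<Longrightarrow> minor3 f r1 r2 r3 c1 c2 c3 = 0"
  by (subst minor3_transpose) (rule minor3_eq_0_of_rows)

lemma mem_plus_minus_trans:
  fixes x :: "'a::ab_group_add"
  shows "x \<in> {y, - y} \<Longrightarrow> y \<in> {z, - z} \<Longrightarrow> x \<in> {z, - z}"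
  by auto

lemma minor3_rows_perm:
  assumes "{r1, r2, r3} \<subseteq> {s1, s2, s3}" "distinct [r1, r2, r3]"
  shows "minor3 f r1 r2 r3 c1 c2 c3 \<in> {minor3 f s1 s2 s3 c1 c2 c3, - minor3 f s1 s2 s3 c1 c2 c3}"
proof -
  have "r1 \<in> {s1, s2, s3}" "r2 \<in> {s1, s2, s3}" "r3 \<in> {s1, s2, s3}" using assms(1) by auto
  then show ?thesis
    using assms(2) unfolding minor3_def by (elim insertE emptyE) (simp_all add: algebra_simps)
qed

lemma minor3_cols_perm:
  assumes "{c1, c2, c3} \<subseteq> {t1, t2, t3}" "distinct [c1, c2, c3]"
  shows "minor3 f r1 r2 r3 c1 c2 c3 \<in> {minor3 f r1 r2 r3 t1 t2 t3, - minor3 f r1 r2 r3 t1 t2 t3}"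
  using minor3_rows_perm[OF assms] by (simp only: minor3_transpose[of f])

lemma minor3_of_classes:
  assumes "a1 < 3" "a2 < 3" "a3 < 3" "b1 < 3" "b2 < 3" "b3 < 3"
  shows "minor3 F a1 a2 a3 b1 b2 b3 \<in> {0, minor3 F 0 1 2 0 1 2, - minor3 F 0 1 2 0 1 2}"
proof (cases "distinct [a1, a2, a3] \<and> distinct [b1, b2, b3]")
  case True
  have "minor3 F a1 a2 a3 b1 b2 b3 \<in> {minor3 F 0 1 2 b1 b2 b3, - minor3 F 0 1 2 b1 b2 b3}"
    using True assms by (intro minor3_rows_perm) auto
  moreover have "minor3 F 0 1 2 b1 b2 b3 \<in> {minor3 F 0 1 2 0 1 2, - minor3 F 0 1 2 0 1 2}"
    using True assms by (intro minor3_cols_perm) auto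
  ultimately show ?thesis
    by (metis insertCI mem_plus_minus_trans)
next
  case False
  then show ?thesis
    by (auto intro: minor3_eq_0_of_rows minor3_eq_0_of_cols)
qed

lemma det_2x2:
  assumes A: "A \<in> carrier_mat 2 2"
  shows "det A = A $$ (0, 0) * A $$ (1, 1) - A $$ (0, 1) * A $$ (1, 0)"
proof -
  have "det A = (\<Sum>i<2. A $$ (i, 0) * cofactor A i 0)"
    by (rule laplace_expansion_column[OF A]) simp
  also have "\<dots> = A $$ (0, 0) * det (mat_delete A 0 0) - A $$ (1, 0) * det (mat_delete A 1 0)"
    by (simp add: numeral_2_eq_2 lessThan_Suc cofactor_def)
  also have "\<dots> = A $$ (0, 0) * A $$ (1, 1) - A $$ (0, 1) * A $$ (1, 0)"
    using A by (simp add: det_single mat_delete_def)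
  finally show ?thesis .
qed

lemma det_3x3:
  assumes A: "A \<in> carrier_mat 3 3"
  shows "det A = minor3 (\<lambda>i j. A $$ (i, j)) 0 1 2 0 1 2"
proof -
  have "det A = (\<Sum>i<3. A $$ (i, 0) * cofactor A i 0)"
    by (rule laplace_expansion_column[OF A]) simp
  also have "\<dots> = A $$ (0, 0) * det (mat_delete A 0 0) - A $$ (1, 0) * det (mat_delete A 1 0)
      + A $$ (2, 0) * det (mat_delete A 2 0)"
    by (simp add: numeral_3_eq_3 numeral_2_eq_2 lessThan_Suc cofactor_def)
  also have "\<dots> = minor3 (\<lambda>i j. A $$ (i, j)) 0 1 2 0 1 2"
    using A by (simp add: det_2x2 mat_delete_def minor3_def algebra_simps numeral_2_eq_2)
  finally show ?thesis .
qed

lemma card_3_sorted: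
  assumes "card (S :: nat set) = 3"
  obtains a b c where "a < b" "b < c" "S = {a, b, c}"
proof -
  have "finite S" using assms by (intro card_ge_0_finite) simp
  have "length (sorted_list_of_set S) = Suc (Suc (Suc 0))"
    using assms by simp
  then obtain a b c where l: "sorted_list_of_set S = [a, b, c]"
    by (auto simp: length_Suc_conv simp del: length_sorted_list_of_set)
  have "sorted_wrt (<) [a, b, c]"
    using strict_sorted_list_of_set[of S] l by simp
  moreover have "S = {a, b, c}"
    using set_sorted_list_of_set[OF \<open>finite S\<close>] l by simp
  ultimately show thesis using that[of a b c] by simp
qed

lemma pick_3:
  assumes "a < b" "b < c"
  shows "pick {a, b, c} 0 = a" "pick {a, b, c} 1 = b" "pick {a, b, c} 2 = c"
proof -
  have "{x \<in> {a, b, c}. x < a} = {}" "{x \<in> {a, b, c}. x < b} = {a}" "{x \<in> {a, b, c}. x < c} = {a, b}"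
    using assms by auto
  note card_eqs = this
  show "pick {a, b, c} 0 = a"
    using pick_card_in_set[of a "{a, b, c}", unfolded card_eqs] by simp
  show "pick {a, b, c} 1 = b"
    using pick_card_in_set[of b "{a, b, c}", unfolded card_eqs] by (simp del: pick.simps)
  show "pick {a, b, c} 2 = c"
    using pick_card_in_set[of c "{a, b, c}", unfolded card_eqs] assms
    by (simp del: pick.simps add: numeral_2_eq_2)
qed

lemma det_submatrix_sorted:
  assumes A: "A \<in> carrier_mat N N"
    and r: "r1 < r2" "r2 < r3" "r3 < N" and c: "c1 < c2" "c2 < c3" "c3 < N"
  shows "det (submatrix A {r1, r2, r3} {c1, c2, c3}) = minor3 (\<lambda>i j. A $$ (i, j)) r1 r2 r3 c1 c2 c3"
proof -
  have rows: "{i. i < dim_row A \<and> i \<in> {r1, r2, r3}} = {r1, r2, r3}"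
    and cols: "{j. j < dim_col A \<and> j \<in> {c1, c2, c3}} = {c1, c2, c3}"
    using A r c by auto
  have card: "card {r1, r2, r3} = 3" "card {c1, c2, c3} = 3"
    using r c by auto
  have S: "submatrix A {r1, r2, r3} {c1, c2, c3} \<in> carrier_mat 3 3"
    using dim_submatrix[of A "{r1, r2, r3}" "{c1, c2, c3}"] unfolding rows cols card by auto
  have entries: "submatrix A {r1, r2, r3} {c1, c2, c3} $$ (i, j)
      = A $$ (pick {r1, r2, r3} i, pick {c1, c2, c3} j)" if "i < 3" "j < 3" for i j
    using that by (intro submatrix_index) (unfold rows cols card, simp_all)
  show ?thesis
    unfolding det_3x3[OF S] minor3_def
    by (simp del: pick.simps add: entries pick_3 pick_3(2)[unfolded One_nat_def] r c)
qed

lemma det_submatrix_3: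
  assumes A: "A \<in> carrier_mat N N"
    and r: "distinct [r1, r2, r3]" "r1 < N" "r2 < N" "r3 < N"
    and c: "distinct [c1, c2, c3]" "c1 < N" "c2 < N" "c3 < N"
  shows "det (submatrix A {r1, r2, r3} {c1, c2, c3})
    \<in> {minor3 (\<lambda>i j. A $$ (i, j)) r1 r2 r3 c1 c2 c3, - minor3 (\<lambda>i j. A $$ (i, j)) r1 r2 r3 c1 c2 c3}"
proof -
  obtain s1 s2 s3 where s: "s1 < s2" "s2 < s3" "{r1, r2, r3} = {s1, s2, s3}"
    using card_3_sorted[of "{r1, r2, r3}"] r(1) by auto
  obtain t1 t2 t3 where t: "t1 < t2" "t2 < t3" "{c1, c2, c3} = {t1, t2, t3}"
    using card_3_sorted[of "{c1, c2, c3}"] c(1) by auto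
  have "det (submatrix A {r1, r2, r3} {c1, c2, c3}) = minor3 (\<lambda>i j. A $$ (i, j)) s1 s2 s3 t1 t2 t3"
    unfolding s(3) t(3) using s t r c by (intro det_submatrix_sorted[OF A]) auto
  moreover have "minor3 (\<lambda>i j. A $$ (i, j)) s1 s2 s3 t1 t2 t3
      \<in> {minor3 (\<lambda>i j. A $$ (i, j)) r1 r2 r3 t1 t2 t3, - minor3 (\<lambda>i j. A $$ (i, j)) r1 r2 r3 t1 t2 t3}"
    using s by (intro minor3_rows_perm) (auto simp: s(3)[symmetric])
  moreover have "minor3 (\<lambda>i j. A $$ (i, j)) r1 r2 r3 t1 t2 t3
      \<in> {minor3 (\<lambda>i j. A $$ (i, j)) r1 r2 r3 c1 c2 c3, - minor3 (\<lambda>i j. A $$ (i, j)) r1 r2 r3 c1 c2 c3}"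
    using t by (intro minor3_cols_perm) (auto simp: t(3)[symmetric])
  ultimately show ?thesis
    by (metis mem_plus_minus_trans)
qed

section \<open>The third critical ideal\<close>

lemma mem_critical_ideal_3I:
  assumes A: "A \<in> carrier_mat N N"
    and r: "distinct [r1, r2, r3]" "r1 < N" "r2 < N" "r3 < N"
    and c: "distinct [c1, c2, c3]" "c1 < N" "c2 < N" "c3 < N"
    and g: "minor3 (\<lambda>i j. A $$ (i, j)) r1 r2 r3 c1 c2 c3 \<in> {g, - g}"
  shows "g \<in> critical_ideal 3 A"
proof -
  have "det (submatrix A {r1, r2, r3} {c1, c2, c3}) \<in> critical_ideal 3 A"
    unfolding critical_ideal_def using A r c
    by (intro ideal_generated_base CollectI exI[of _ "{r1, r2, r3}"] exI[of _ "{c1, c2, c3}"]) auto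
  moreover have "det (submatrix A {r1, r2, r3} {c1, c2, c3}) \<in> {g, - g}"
    using det_submatrix_3[OF A r c] g by (elim mem_plus_minus_trans) auto
  ultimately show ?thesis
    unfolding critical_ideal_def by (auto simp: ideal_generated_minus_iff)
qed

lemma critical_ideal_3_subset:
  assumes A: "A \<in> carrier_mat N N"
    and minors: "\<And>r1 r2 r3 c1 c2 c3. r1 < r2 \<Longrightarrow> r2 < r3 \<Longrightarrow> r3 < N \<Longrightarrow>
       c1 < c2 \<Longrightarrow> c2 < c3 \<Longrightarrow> c3 < N \<Longrightarrow>
       minor3 (\<lambda>i j. A $$ (i, j)) r1 r2 r3 c1 c2 c3 \<in> ideal_generated S"
  shows "critical_ideal 3 A \<subseteq> ideal_generated S"
  unfolding critical_ideal_def
proof (rule ideal_generated_subset, rule subsetI)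
  fix x assume "x \<in> {det (submatrix A I J) | I J. I \<subseteq> {..<dim_row A} \<and> J \<subseteq> {..<dim_col A}
                                                \<and> card I = 3 \<and> card J = 3}"
  then obtain I J where x: "x = det (submatrix A I J)"
    and IJ: "I \<subseteq> {..<N}" "J \<subseteq> {..<N}" "card I = 3" "card J = 3"
    using A by auto
  obtain r1 r2 r3 where r: "r1 < r2" "r2 < r3" "I = {r1, r2, r3}" using card_3_sorted[OF IJ(3)] .
  obtain c1 c2 c3 where c: "c1 < c2" "c2 < c3" "J = {c1, c2, c3}" using card_3_sorted[OF IJ(4)] .
  have "r3 < N" "c3 < N" using IJ r c by auto
  then show "x \<in> ideal_generated S"
    unfolding x r(3) c(3) using r c by (simp add: det_submatrix_sorted[OF A] minors)
qed

lemma critical_ideal_3_subset_of_4x4: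
  assumes A: "A \<in> carrier_mat 4 4"
    and minors: "\<And>r1 r2 r3 c1 c2 c3.
      (r1, r2, r3) \<in> {(0, 1, 2), (0, 1, 3), (0, 2, 3), (1, 2, 3)} \<Longrightarrow>
      (c1, c2, c3) \<in> {(0, 1, 2), (0, 1, 3), (0, 2, 3), (1, 2, 3)} \<Longrightarrow>
      minor3 (\<lambda>i j. A $$ (i, j)) r1 r2 r3 c1 c2 c3 \<in> ideal_generated S"
  shows "critical_ideal 3 A \<subseteq> ideal_generated S"
proof (rule critical_ideal_3_subset[OF A])
  have sorted: "(a, b, c) \<in> {(0, 1, 2), (0, 1, 3), (0, 2, 3), (1, 2, 3)}"
    if "a < b" "b < c" "c < (4::nat)" for a b c
    using that by auto
  show "minor3 (\<lambda>i j. A $$ (i, j)) r1 r2 r3 c1 c2 c3 \<in> ideal_generated S"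
    if "r1 < r2" "r2 < r3" "r3 < 4" "c1 < c2" "c2 < c3" "c3 < 4" for r1 r2 r3 c1 c2 c3
    using that by (intro minors sorted)
qed

lemma critical_ideal_3_subset_of_block_cong:
  fixes F :: "nat \<Rightarrow> nat \<Rightarrow> zpoly" and cls :: "nat \<Rightarrow> nat"
  assumes A: "A \<in> carrier_mat N N"
    and cong: "\<And>i j. i < N \<Longrightarrow> j < N \<Longrightarrow> A $$ (i, j) - F (cls i) (cls j) \<in> ideal_generated S"
    and minors: "\<And>r1 r2 r3 c1 c2 c3. r1 < N \<Longrightarrow> r2 < N \<Longrightarrow> r3 < N \<Longrightarrow>
       c1 < N \<Longrightarrow> c2 < N \<Longrightarrow> c3 < N \<Longrightarrow>
       minor3 F (cls r1) (cls r2) (cls r3) (cls c1) (cls c2) (cls c3) \<in> ideal_generated S"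
  shows "critical_ideal 3 A \<subseteq> ideal_generated S"
proof (rule critical_ideal_subset_of_cong[OF A, where E = "mat N N (\<lambda>(i, j). F (cls i) (cls j))"])
  show "A $$ (i, j) - mat N N (\<lambda>(i, j). F (cls i) (cls j)) $$ (i, j) \<in> ideal_generated S"
    if "i < N" "j < N" for i j
    using that cong by simp
  show "critical_ideal 3 (mat N N (\<lambda>(i, j). F (cls i) (cls j))) \<subseteq> ideal_generated S"
  proof (rule critical_ideal_3_subset)
    fix r1 r2 r3 c1 c2 c3
    assume "r1 < r2" "r2 < r3" "r3 < N" "c1 < c2" "c2 < c3" "c3 < N"
    then show "minor3 (\<lambda>i j. mat N N (\<lambda>(i, j). F (cls i) (cls j)) $$ (i, j)) r1 r2 r3 c1 c2 c3
        \<in> ideal_generated S"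
      using minors[of r1 r2 r3 c1 c2 c3] by (simp add: minor3_def)
  qed simp
qed simp

lemma critical_ideal_3_subset_of_block3_cong:
  fixes F :: "nat \<Rightarrow> nat \<Rightarrow> zpoly" and cls :: "nat \<Rightarrow> nat"
  assumes A: "A \<in> carrier_mat N N"
    and cls: "\<And>i. i < N \<Longrightarrow> cls i < 3"
    and cong: "\<And>i j. i < N \<Longrightarrow> j < N \<Longrightarrow> A $$ (i, j) - F (cls i) (cls j) \<in> ideal_generated S"
    and det: "minor3 F 0 1 2 0 1 2 \<in> ideal_generated S"
  shows "critical_ideal 3 A \<subseteq> ideal_generated S"
proof (rule critical_ideal_3_subset_of_block_cong[where F = F and cls = cls, OF A cong])
  fix r1 r2 r3 c1 c2 c3
  assume "r1 < N" "r2 < N" "r3 < N" "c1 < N" "c2 < N" "c3 < N"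
  then have "minor3 F (cls r1) (cls r2) (cls r3) (cls c1) (cls c2) (cls c3)
      \<in> {0, minor3 F 0 1 2 0 1 2, - minor3 F 0 1 2 0 1 2}"
    by (intro minor3_of_classes cls)
  then show "minor3 F (cls r1) (cls r2) (cls r3) (cls c1) (cls c2) (cls c3) \<in> ideal_generated S"
    using det by (auto simp: ideal_generated_zero ideal_generated_minus_iff)
qed

lemma critical_ideal_3_subset_of_block2_cong:
  fixes F :: "nat \<Rightarrow> nat \<Rightarrow> zpoly" and cls :: "nat \<Rightarrow> nat"
  assumes A: "A \<in> carrier_mat N N"
    and cls: "\<And>i. i < N \<Longrightarrow> cls i < 2"
    and cong: "\<And>i j. i < N \<Longrightarrow> j < N \<Longrightarrow> A $$ (i, j) - F (cls i) (cls j) \<in> ideal_generated S"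
  shows "critical_ideal 3 A \<subseteq> ideal_generated S"
proof (rule critical_ideal_3_subset_of_block_cong[where F = F and cls = cls, OF A cong])
  fix r1 r2 r3 c1 c2 c3
  assume "r1 < N" "r2 < N" "r3 < N" "c1 < N" "c2 < N" "c3 < N"
  then have "cls r1 < 2" "cls r2 < 2" "cls r3 < 2"
    using cls by auto
  then have "cls r1 = cls r2 \<or> cls r2 = cls r3 \<or> cls r1 = cls r3"
    by linarith
  then show "minor3 F (cls r1) (cls r2) (cls r3) (cls c1) (cls c2) (cls c3) \<in> ideal_generated S"
    by (simp add: minor3_eq_0_of_rows ideal_generated_zero)
qed

section \<open>The complete tripartite graph\<close>

abbreviation tri_laplacian :: "nat \<Rightarrow> nat \<Rightarrow> nat \<Rightarrow> zpoly mat" where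
  "tri_laplacian m n p \<equiv> gen_laplacian (m + n + p) (tri_mult m n)"

lemma tri_laplacian_carrier: "tri_laplacian m n p \<in> carrier_mat (m + n + p) (m + n + p)"
  unfolding gen_laplacian_def by simp

lemma tri_laplacian_index:
  "i < m + n + p \<Longrightarrow> j < m + n + p \<Longrightarrow> tri_laplacian m n p $$ (i, j) =
     (if i = j then Var i else if tri_part m n i = tri_part m n j then 0 else - 1)"
  unfolding gen_laplacian_def tri_mult_def by simp

lemma tri_part_less_3: "tri_part m n i < 3"
  unfolding tri_part_def by simp

lemma var_mem_tri_I3_of_three_parts:
  assumes "tri_part m n u' = tri_part m n u" "tri_part m n v' = tri_part m n v"
    "tri_part m n u \<noteq> tri_part m n v" "tri_part m n w \<noteq> tri_part m n u" "tri_part m n w \<noteq> tri_part m n v"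
    "u' \<noteq> u" "v' \<noteq> v" "u < m + n + p" "u' < m + n + p" "v < m + n + p" "v' < m + n + p" "w < m + n + p"
  shows "Var u \<in> critical_ideal 3 (tri_laplacian m n p)"
proof -
  have "u \<noteq> v" "u' \<noteq> v" "u \<noteq> w" "w \<noteq> v'" "u \<noteq> v'" "u' \<noteq> w" "v \<noteq> w" "u' \<noteq> v'"
    using assms by metis+
  with assms show ?thesis
    by (intro mem_critical_ideal_3I[of _ _ u u' v u w v', OF tri_laplacian_carrier])
      (simp_all add: minor3_def tri_laplacian_index)
qed

lemma var_mem_tri_I3_of_big_part:
  assumes "tri_part m n u' = tri_part m n u" "tri_part m n u'' = tri_part m n u" "tri_part m n w \<noteq> tri_part m n u"
    "distinct [u, u', u'']" "u < m + n + p" "u' < m + n + p" "u'' < m + n + p" "w < m + n + p"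
  shows "Var u \<in> critical_ideal 3 (tri_laplacian m n p)"
proof -
  have "u \<noteq> w" "u' \<noteq> w" "u'' \<noteq> w"
    using assms by metis+
  with assms show ?thesis
    by (intro mem_critical_ideal_3I[of _ _ u u' w u u'' w, OF tri_laplacian_carrier])
      (simp_all add: minor3_def tri_laplacian_index)
qed

lemma var_mem_tri_I3_first_part:
  assumes "i < m" "2 \<le> m \<and> 2 \<le> n \<and> 1 \<le> p \<or> 3 \<le> m \<and> 1 \<le> n"
  shows "Var i \<in> critical_ideal 3 (tri_laplacian m n p)"
  using assms(2)
proof
  assume "2 \<le> m \<and> 2 \<le> n \<and> 1 \<le> p"
  with assms(1) show ?thesis
    by (intro var_mem_tri_I3_of_three_parts[where u' = "if i = 0 then 1 else 0" and v = m
          and v' = "m + 1" and w = "m + n"]) (auto simp: tri_part_def)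
next
  assume "3 \<le> m \<and> 1 \<le> n"
  with assms(1) show ?thesis
    by (intro var_mem_tri_I3_of_big_part[where u' = "if i = 0 then 1 else 0"
          and u'' = "if i = 2 then 1 else 2" and w = m]) (auto simp: tri_part_def)
qed

lemma var_mem_tri_I3_second_part:
  assumes "m \<le> j" "j < m + n" "2 \<le> n \<and> 2 \<le> m \<and> 1 \<le> p \<or> 3 \<le> n \<and> 1 \<le> m"
  shows "Var j \<in> critical_ideal 3 (tri_laplacian m n p)"
  using assms(3)
proof
  assume "2 \<le> n \<and> 2 \<le> m \<and> 1 \<le> p"
  with assms(1,2) show ?thesis
    by (intro var_mem_tri_I3_of_three_parts[where u' = "if j = m then m + 1 else m" and v = 0
          and v' = 1 and w = "m + n"]) (auto simp: tri_part_def)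
next
  assume "3 \<le> n \<and> 1 \<le> m"
  with assms(1,2) show ?thesis
    by (intro var_mem_tri_I3_of_big_part[where u' = "if j = m then m + 1 else m"
          and u'' = "if j = m + 2 then m + 1 else m + 2" and w = 0]) (auto simp: tri_part_def)
qed

lemma var_mem_tri_I3_third_part:
  assumes "m + n \<le> k" "k < m + n + p" "2 \<le> p" "2 \<le> m" "1 \<le> n"
  shows "Var k \<in> critical_ideal 3 (tri_laplacian m n p)"
  using assms
  by (intro var_mem_tri_I3_of_three_parts[where u' = "if k = m + n then m + n + 1 else m + n"
        and v = 0 and v' = 1 and w = m]) (auto simp: tri_part_def)

lemma two_mem_tri_I3:
  assumes "2 \<le> m" "2 \<le> n" "2 \<le> p"
  shows "2 \<in> critical_ideal 3 (tri_laplacian m n p)"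
  using assms
  by (intro mem_critical_ideal_3I[of _ _ 0 m "m + n" 1 "m + 1" "m + n + 1", OF tri_laplacian_carrier])
    (simp_all add: minor3_def tri_laplacian_index tri_part_def)

lemma var_add_two_mem_tri_I3:
  assumes "2 \<le> m" "2 \<le> n" "1 \<le> p"
  shows "Var (m + n) + 2 \<in> critical_ideal 3 (tri_laplacian m n p)"
  using assms
  by (intro mem_critical_ideal_3I[of _ _ 0 m "m + n" 1 "m + 1" "m + n", OF tri_laplacian_carrier])
    (simp_all add: minor3_def tri_laplacian_index tri_part_def)

lemma var_add_var_add_two_mem_tri_I3:
  assumes "2 \<le> m" "1 \<le> n" "1 \<le> p"
  shows "Var m + Var (m + n) + 2 \<in> critical_ideal 3 (tri_laplacian m n p)"
  using assms
  by (intro mem_critical_ideal_3I[of _ _ 0 m "m + n" 1 m "m + n", OF tri_laplacian_carrier])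
    (simp_all add: minor3_def tri_laplacian_index tri_part_def)

lemma var_add_var_mem_tri_I3:
  assumes "2 \<le> m" "2 \<le> n"
  shows "Var m + Var (m + 1) \<in> critical_ideal 3 (tri_laplacian m n p)"
  using assms
  by (intro mem_critical_ideal_3I[of _ _ 0 m "m + 1" 1 m "m + 1", OF tri_laplacian_carrier])
    (simp_all add: minor3_def tri_laplacian_index tri_part_def)

section \<open>The eight cases\<close>

lemma tri_I3_K_mnp:
  assumes "2 \<le> m" "2 \<le> n" "2 \<le> p"
  shows "critical_ideal 3 (tri_laplacian m n p) =
    ideal_generated (insert 2 (Var ` {..<m + n + p}))"
    (is "_ = ideal_generated ?G")
proof (rule critical_ideal_eqI)
  define F :: "nat \<Rightarrow> nat \<Rightarrow> zpoly"
    where "F a b = [[0, -1, -1], [-1, 0, -1], [-1, -1, 0]] ! a ! b" for a b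
  show "critical_ideal 3 (tri_laplacian m n p) \<subseteq> ideal_generated ?G"
  proof (rule critical_ideal_3_subset_of_block3_cong[OF tri_laplacian_carrier tri_part_less_3])
    fix i j assume ij: "i < m + n + p" "j < m + n + p"
    then show "tri_laplacian m n p $$ (i, j) - F (tri_part m n i) (tri_part m n j) \<in> ideal_generated ?G"
      unfolding tri_laplacian_index[OF ij]
      by (auto simp: F_def tri_part_def ideal_generated_zero intro: ideal_generated_base)
  next
    show "minor3 F 0 1 2 0 1 2 \<in> ideal_generated ?G"
      by (simp add: F_def minor3_def ideal_generated_minus_iff ideal_generated_base)
  qed
  have "Var i \<in> critical_ideal 3 (tri_laplacian m n p)" if "i < m + n + p" for i
    using that assms var_mem_tri_I3_first_part[of i m n p] var_mem_tri_I3_second_part[of m i n p]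
      var_mem_tri_I3_third_part[of m n i p]
    by (cases "i < m"; cases "i < m + n") auto
  then show "?G \<subseteq> critical_ideal 3 (tri_laplacian m n p)"
    using two_mem_tri_I3[OF assms] by auto
qed

lemma tri_I3_K_mn1:
  assumes "2 \<le> m" "2 \<le> n" "p = 1"
  shows "critical_ideal 3 (tri_laplacian m n p) =
    ideal_generated (insert (Var (m + n) + 2) (Var ` {..<m + n}))"
    (is "_ = ideal_generated ?G")
proof (rule critical_ideal_eqI)
  define F :: "nat \<Rightarrow> nat \<Rightarrow> zpoly"
    where "F a b = [[0, -1, -1], [-1, 0, -1], [-1, -1, -2]] ! a ! b" for a b
  show "critical_ideal 3 (tri_laplacian m n p) \<subseteq> ideal_generated ?G"
  proof (rule critical_ideal_3_subset_of_block3_cong[OF tri_laplacian_carrier tri_part_less_3])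
    fix i j assume ij: "i < m + n + p" "j < m + n + p"
    then show "tri_laplacian m n p $$ (i, j) - F (tri_part m n i) (tri_part m n j) \<in> ideal_generated ?G"
      unfolding tri_laplacian_index[OF ij] using assms
      by (auto simp: F_def tri_part_def less_Suc_eq algebra_simps ideal_generated_zero
          intro: ideal_generated_base)
  next
    show "minor3 F 0 1 2 0 1 2 \<in> ideal_generated ?G"
      by (simp add: F_def minor3_def ideal_generated_zero)
  qed
  have "Var i \<in> critical_ideal 3 (tri_laplacian m n p)" if "i < m + n" for i
    using that assms var_mem_tri_I3_first_part[of i m n p] var_mem_tri_I3_second_part[of m i n p]
    by (cases "i < m") auto
  then show "?G \<subseteq> critical_ideal 3 (tri_laplacian m n p)"
    using var_add_two_mem_tri_I3[of m n p] assms by auto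
qed

lemma tri_I3_K_m11:
  assumes "3 \<le> m" "n = 1" "p = 1"
  shows "critical_ideal 3 (tri_laplacian m n p) =
    ideal_generated (insert (Var m + Var (m + 1) + 2) (Var ` {..<m}))"
    (is "_ = ideal_generated ?G")
proof (rule critical_ideal_eqI)
  define F :: "nat \<Rightarrow> nat \<Rightarrow> zpoly"
    where "F a b = [[0, -1, -1], [-1, - Var (m + 1) - 2, -1], [-1, -1, Var (m + 1)]] ! a ! b" for a b
  show "critical_ideal 3 (tri_laplacian m n p) \<subseteq> ideal_generated ?G"
  proof (rule critical_ideal_3_subset_of_block3_cong[OF tri_laplacian_carrier tri_part_less_3])
    fix i j assume ij: "i < m + n + p" "j < m + n + p"
    then show "tri_laplacian m n p $$ (i, j) - F (tri_part m n i) (tri_part m n j) \<in> ideal_generated ?G"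
      unfolding tri_laplacian_index[OF ij] using assms
      by (auto simp: F_def tri_part_def less_Suc_eq algebra_simps ideal_generated_zero
          intro: ideal_generated_base)
  next
    show "minor3 F 0 1 2 0 1 2 \<in> ideal_generated ?G"
      by (simp add: F_def minor3_def algebra_simps ideal_generated_zero)
  qed
  show "?G \<subseteq> critical_ideal 3 (tri_laplacian m n p)"
    using var_mem_tri_I3_first_part[of _ m n p] var_add_var_add_two_mem_tri_I3[of m n p] assms by auto
qed

lemma tri_I3_K_211:
  assumes "m = 2" "n = 1" "p = 1"
  shows "critical_ideal 3 (tri_laplacian m n p) = ideal_generated
    {Var 0 * Var 1 + Var 0 + Var 1, Var 0 * Var 3 + Var 0, Var 1 * Var 3 + Var 1, Var 2 + Var 3 + 2}"
proof -
  define gs :: "zpoly list"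
    where "gs = [Var 0 * Var 1 + Var 0 + Var 1, Var 0 * Var 3 + Var 0, Var 1 * Var 3 + Var 1, Var 2 + Var 3 + 2]"
  let ?M = "minor3 (\<lambda>i j. tri_laplacian m n p $$ (i, j))"
  let ?c = "\<lambda>qs. sum_list (map2 (*) qs gs)"
  have entries: "tri_laplacian m n p $$ (i, j)
      = (if i = j then Var i else if tri_part 2 1 i = tri_part 2 1 j then 0 else - 1)"
    if "i < 4" "j < 4" for i j
    using tri_laplacian_index[of i m n p j] that assms by simp
  \<comment> \<open>\<open>map2\<close> truncates, so omitted trailing coefficients are zero\<close>
  have table:
    "?M 0 1 2 0 1 2 = ?c [Var 2, 1, 1, - Var 0 - Var 1]"
    "?M 0 1 2 0 1 3 = ?c [-1]"
    "?M 0 1 2 0 2 3 = ?c [0, -1, 0, Var 0]"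
    "?M 0 1 2 1 2 3 = ?c [0, 0, 1, - Var 1]"
    "?M 0 1 3 0 1 2 = ?c [-1]"
    "?M 0 1 3 0 1 3 = ?c [Var 3, -1, -1]"
    "?M 0 1 3 0 2 3 = ?c [0, -1]"
    "?M 0 1 3 1 2 3 = ?c [0, 0, 1]"
    "?M 0 2 3 0 1 2 = ?c [0, -1, 0, Var 0]"
    "?M 0 2 3 0 1 3 = ?c [0, -1]"
    "?M 0 2 3 0 2 3 = ?c [0, 1 + Var 2, 0, -1 - Var 0]"
    "?M 0 2 3 1 2 3 = ?c [0, 0, 0, -1]"
    "?M 1 2 3 0 1 2 = ?c [0, 0, 1, - Var 1]"
    "?M 1 2 3 0 1 3 = ?c [0, 0, 1]"
    "?M 1 2 3 0 2 3 = ?c [0, 0, 0, -1]"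
    "?M 1 2 3 1 2 3 = ?c [0, 0, 1 + Var 2, -1 - Var 1]"
    by (simp_all add: minor3_def entries tri_part_def) (simp_all add: gs_def algebra_simps)
  have "critical_ideal 3 (tri_laplacian m n p) \<subseteq> ideal_generated (set gs)"
    using table assms tri_laplacian_carrier[of m n p]
    by (intro critical_ideal_3_subset_of_4x4) (auto intro: sum_list_map2_mult_mem_ideal_generated)
  moreover have "set gs \<subseteq> critical_ideal 3 (tri_laplacian m n p)"
  proof -
    have "Var 0 * Var 1 + Var 0 + Var 1 \<in> critical_ideal 3 (tri_laplacian m n p)"
      using table(5) assms
      by (intro mem_critical_ideal_3I[of _ _ 0 1 3 0 1 2, OF tri_laplacian_carrier]) (simp_all add: gs_def)
    moreover have "Var 0 * Var 3 + Var 0 \<in> critical_ideal 3 (tri_laplacian m n p)"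
      using table(7) assms
      by (intro mem_critical_ideal_3I[of _ _ 0 1 3 0 2 3, OF tri_laplacian_carrier]) (simp_all add: gs_def)
    moreover have "Var 1 * Var 3 + Var 1 \<in> critical_ideal 3 (tri_laplacian m n p)"
      using table(8) assms
      by (intro mem_critical_ideal_3I[of _ _ 0 1 3 1 2 3, OF tri_laplacian_carrier]) (simp_all add: gs_def)
    moreover have "Var 2 + Var 3 + 2 \<in> critical_ideal 3 (tri_laplacian m n p)"
      using table(12) assms
      by (intro mem_critical_ideal_3I[of _ _ 0 2 3 1 2 3, OF tri_laplacian_carrier]) (simp_all add: gs_def)
    ultimately show ?thesis by (simp add: gs_def)
  qed
  ultimately have "critical_ideal 3 (tri_laplacian m n p) = ideal_generated (set gs)"
    by (rule critical_ideal_eqI)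
  then show ?thesis by (simp add: gs_def)
qed

lemma tri_I3_K_mn0:
  assumes "3 \<le> m" "3 \<le> n" "p = 0"
  shows "critical_ideal 3 (tri_laplacian m n p) =
    ideal_generated (Var ` {..<m + n})"
proof (rule critical_ideal_eqI)
  define F :: "nat \<Rightarrow> nat \<Rightarrow> zpoly"
    where "F a b = [[0, -1], [-1, 0]] ! a ! b" for a b
  show "critical_ideal 3 (tri_laplacian m n p) \<subseteq> ideal_generated (Var ` {..<m + n})"
  proof (rule critical_ideal_3_subset_of_block2_cong[OF tri_laplacian_carrier])
    show "tri_part m n i < 2" if "i < m + n + p" for i
      using that assms by (simp add: tri_part_def)
    fix i j assume ij: "i < m + n + p" "j < m + n + p"
    then show "tri_laplacian m n p $$ (i, j) - F (tri_part m n i) (tri_part m n j) \<in> ideal_generated (Var ` {..<m + n})"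
      unfolding tri_laplacian_index[OF ij] using assms
      by (auto simp: F_def tri_part_def ideal_generated_zero intro: ideal_generated_base)
  qed
  have "Var i \<in> critical_ideal 3 (tri_laplacian m n p)" if "i < m + n" for i
    using that assms var_mem_tri_I3_first_part[of i m n p] var_mem_tri_I3_second_part[of m i n p]
    by (cases "i < m") auto
  then show "Var ` {..<m + n} \<subseteq> critical_ideal 3 (tri_laplacian m n p)"
    by auto
qed

text \<open>The two vertices of the second part are separated into their own classes, since
  modulo the ideal their diagonal entries differ.\<close>

lemma tri_I3_K_m20:
  assumes "3 \<le> m" "n = 2" "p = 0"
  shows "critical_ideal 3 (tri_laplacian m n p) =
    ideal_generated (insert (Var m + Var (m + 1)) (Var ` {..<m}))"
    (is "_ = ideal_generated ?G")
proof (rule critical_ideal_eqI)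
  define F :: "nat \<Rightarrow> nat \<Rightarrow> zpoly"
    where "F a b = [[0, -1, -1], [-1, Var m, 0], [-1, 0, - Var m]] ! a ! b" for a b
  define cls :: "nat \<Rightarrow> nat" where "cls i = (if i < m then 0 else if i = m then 1 else 2)" for i
  show "critical_ideal 3 (tri_laplacian m n p) \<subseteq> ideal_generated ?G"
  proof (rule critical_ideal_3_subset_of_block3_cong[OF tri_laplacian_carrier])
    show "cls i < 3" for i
      by (simp add: cls_def)
    fix i j assume ij: "i < m + n + p" "j < m + n + p"
    then show "tri_laplacian m n p $$ (i, j) - F (cls i) (cls j) \<in> ideal_generated ?G"
      unfolding tri_laplacian_index[OF ij] using assms
      by (auto simp: F_def cls_def tri_part_def less_Suc_eq algebra_simps ideal_generated_zero
          intro: ideal_generated_base)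
  next
    show "minor3 F 0 1 2 0 1 2 \<in> ideal_generated ?G"
      by (simp add: F_def minor3_def ideal_generated_zero)
  qed
  show "?G \<subseteq> critical_ideal 3 (tri_laplacian m n p)"
    using var_mem_tri_I3_first_part[of _ m n p] var_add_var_mem_tri_I3[of m n p] assms by auto
qed

lemma tri_I3_K_220:
  assumes "m = 2" "n = 2" "p = 0"
  shows "critical_ideal 3 (tri_laplacian m n p) = ideal_generated
    {Var 1 * Var 3, Var 0 + Var 1, Var 2 + Var 3}"
proof -
  define gs :: "zpoly list"
    where "gs = [Var 1 * Var 3, Var 0 + Var 1, Var 2 + Var 3]"
  let ?M = "minor3 (\<lambda>i j. tri_laplacian m n p $$ (i, j))"
  let ?c = "\<lambda>qs. sum_list (map2 (*) qs gs)"
  have entries: "tri_laplacian m n p $$ (i, j)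
      = (if i = j then Var i else if tri_part 2 2 i = tri_part 2 2 j then 0 else - 1)"
    if "i < 4" "j < 4" for i j
    using tri_laplacian_index[of i m n p j] that assms by simp
  have table:
    "?M 0 1 2 0 1 2 = ?c [Var 1, Var 1 * Var 2 - 1, - Var 1 * Var 1]"
    "?M 0 1 2 0 1 3 = ?c [0, -1]"
    "?M 0 1 2 0 2 3 = ?c [1, Var 2, - Var 1]"
    "?M 0 1 2 1 2 3 = ?c [1, 0, - Var 1]"
    "?M 0 1 3 0 1 2 = ?c [0, -1]"
    "?M 0 1 3 0 1 3 = ?c [Var 0, -1]"
    "?M 0 1 3 0 2 3 = ?c [1, - Var 3]"
    "?M 0 1 3 1 2 3 = ?c [1]"
    "?M 0 2 3 0 1 2 = ?c [1, Var 2, - Var 1]"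
    "?M 0 2 3 0 1 3 = ?c [1, - Var 3]"
    "?M 0 2 3 0 2 3 = ?c [- Var 2, Var 2 * Var 3, -1]"
    "?M 0 2 3 1 2 3 = ?c [0, 0, -1]"
    "?M 1 2 3 0 1 2 = ?c [1, 0, - Var 1]"
    "?M 1 2 3 0 1 3 = ?c [1]"
    "?M 1 2 3 0 2 3 = ?c [0, 0, -1]"
    "?M 1 2 3 1 2 3 = ?c [Var 2, 0, -1]"
    by (simp_all add: minor3_def entries tri_part_def) (simp_all add: gs_def algebra_simps)
  have "critical_ideal 3 (tri_laplacian m n p) \<subseteq> ideal_generated (set gs)"
    using table assms tri_laplacian_carrier[of m n p]
    by (intro critical_ideal_3_subset_of_4x4) (auto intro: sum_list_map2_mult_mem_ideal_generated)
  moreover have "set gs \<subseteq> critical_ideal 3 (tri_laplacian m n p)"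
  proof -
    have "Var 1 * Var 3 \<in> critical_ideal 3 (tri_laplacian m n p)"
      using table(14) assms
      by (intro mem_critical_ideal_3I[of _ _ 1 2 3 0 1 3, OF tri_laplacian_carrier]) (simp_all add: gs_def)
    moreover have "Var 0 + Var 1 \<in> critical_ideal 3 (tri_laplacian m n p)"
      using table(2) assms
      by (intro mem_critical_ideal_3I[of _ _ 0 1 2 0 1 3, OF tri_laplacian_carrier]) (simp_all add: gs_def)
    moreover have "Var 2 + Var 3 \<in> critical_ideal 3 (tri_laplacian m n p)"
      using table(12) assms
      by (intro mem_critical_ideal_3I[of _ _ 0 2 3 1 2 3, OF tri_laplacian_carrier]) (simp_all add: gs_def)
    ultimately show ?thesis by (simp add: gs_def)
  qed
  ultimately have "critical_ideal 3 (tri_laplacian m n p) = ideal_generated (set gs)"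
    by (rule critical_ideal_eqI)
  then show ?thesis by (simp add: gs_def)
qed

lemma tri_I3_K_m10:
  assumes "3 \<le> m" "n = 1" "p = 0"
  shows "critical_ideal 3 (tri_laplacian m n p) =
    ideal_generated (Var ` {..<m})"
proof (rule critical_ideal_eqI)
  define F :: "nat \<Rightarrow> nat \<Rightarrow> zpoly"
    where "F a b = [[0, -1], [-1, Var m]] ! a ! b" for a b
  show "critical_ideal 3 (tri_laplacian m n p) \<subseteq> ideal_generated (Var ` {..<m})"
  proof (rule critical_ideal_3_subset_of_block2_cong[OF tri_laplacian_carrier])
    show "tri_part m n i < 2" if "i < m + n + p" for i
      using that assms by (simp add: tri_part_def)
    fix i j assume ij: "i < m + n + p" "j < m + n + p"
    then show "tri_laplacian m n p $$ (i, j) - F (tri_part m n i) (tri_part m n j) \<in> ideal_generated (Var ` {..<m})"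
      unfolding tri_laplacian_index[OF ij] using assms
      by (auto simp: F_def tri_part_def less_Suc_eq algebra_simps ideal_generated_zero
          intro: ideal_generated_base)
  qed
  show "Var ` {..<m} \<subseteq> critical_ideal 3 (tri_laplacian m n p)"
    using var_mem_tri_I3_first_part[of _ m n p] assms by auto
qed

lemma xv_image: "xv ` {1..m} = Var ` {..<m}"
proof (intro equalityI subsetI)
  fix v assume "v \<in> Var ` {..<m}"
  then obtain i where "i < m" "v = Var i" by blast
  then show "v \<in> xv ` {1..m}"
    by (intro image_eqI[of _ _ "i + 1"]) (simp_all add: xv_def)
qed (auto simp: xv_def intro!: imageI)

lemma yv_image: "yv m ` {1..n} = Var ` {m..<m + n}"
proof (intro equalityI subsetI)
  fix v assume "v \<in> yv m ` {1..n}"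
  then obtain j where j: "v = yv m j" "j \<in> {1..n}" by (rule imageE)
  then obtain k where "j = Suc k" by (cases j) simp_all
  with j have "v = Var (m + k)" "m + k \<in> {m..<m + n}" by (simp_all add: yv_def)
  then show "v \<in> Var ` {m..<m + n}" by (rule image_eqI)
next
  fix v assume "v \<in> Var ` {m..<m + n}"
  then obtain i where i: "v = Var i" "m \<le> i" "i < m + n" by auto
  then obtain k where "i = m + k" using le_Suc_ex by blast
  with i have "v = yv m (Suc k)" "Suc k \<in> {1..n}" by (simp_all add: yv_def)
  then show "v \<in> yv m ` {1..n}" by (rule image_eqI)
qed

lemma zv_image: "zv m n ` {1..p} = Var ` {m + n..<m + n + p}"
proof (intro equalityI subsetI)
  fix v assume "v \<in> zv m n ` {1..p}"
  then obtain j where j: "v = zv m n j" "j \<in> {1..p}" by (rule imageE)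
  then obtain k where "j = Suc k" by (cases j) simp_all
  with j have "v = Var (m + n + k)" "m + n + k \<in> {m + n..<m + n + p}" by (simp_all add: zv_def)
  then show "v \<in> Var ` {m + n..<m + n + p}" by (rule image_eqI)
next
  fix v assume "v \<in> Var ` {m + n..<m + n + p}"
  then obtain i where i: "v = Var i" "m + n \<le> i" "i < m + n + p" by auto
  then obtain k where "i = m + n + k" using le_Suc_ex by blast
  with i have "v = zv m n (Suc k)" "Suc k \<in> {1..p}" by (simp_all add: zv_def)
  then show "v \<in> zv m n ` {1..p}" by (rule image_eqI)
qed

lemma Var_image_lessThan_Un:
  "Var ` {..<a} \<union> Var ` {a..<a + b} = Var ` {..<a + b}"
proof -
  have "{..<a} \<union> {a..<a + b} = {..<a + b}" by auto
  then show ?thesis by (simp only: image_Un[symmetric])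
qed

theorem theorem4p4:
  fixes m n p :: nat
  assumes "m \<ge> n" and "n \<ge> p" and "m + n + p \<ge> 4"
    and "graph_connected (m + n + p) (tri_mult m n)"
  defines "I3 \<equiv> critical_ideal 3 (gen_laplacian (m + n + p) (tri_mult m n))"
    and "X \<equiv> xv ` {1..m}" and "Y \<equiv> yv m ` {1..n}" and "Z \<equiv> zv m n ` {1..p}"
  shows
    "(m \<ge> 2 \<and> n \<ge> 2 \<and> p \<ge> 2 \<longrightarrow> I3 = ideal_generated ({2} \<union> X \<union> Y \<union> Z))
   \<and> (m \<ge> 2 \<and> n \<ge> 2 \<and> p = 1 \<longrightarrow> I3 = ideal_generated (X \<union> Y \<union> {zv m n 1 + 2}))
   \<and> (m \<ge> 3 \<and> n = 1 \<and> p = 1 \<longrightarrow> I3 = ideal_generated (X \<union> {yv m 1 + zv m n 1 + 2}))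
   \<and> (m = 2 \<and> n = 1 \<and> p = 1 \<longrightarrow> I3 = ideal_generated
        {xv 1 * xv 2 + xv 1 + xv 2, xv 1 * zv m n 1 + xv 1, xv 2 * zv m n 1 + xv 2,
         yv m 1 + zv m n 1 + 2})
   \<and> (m \<ge> 3 \<and> n \<ge> 3 \<and> p = 0 \<longrightarrow> I3 = ideal_generated (X \<union> Y))
   \<and> (m \<ge> 3 \<and> n = 2 \<and> p = 0 \<longrightarrow> I3 = ideal_generated (X \<union> {yv m 1 + yv m 2}))
   \<and> (m = 2 \<and> n = 2 \<and> p = 0 \<longrightarrow> I3 = ideal_generated
        {xv 2 * yv m 2, xv 1 + xv 2, yv m 1 + yv m 2})
   \<and> (m \<ge> 3 \<and> n = 1 \<and> p = 0 \<longrightarrow> I3 = ideal_generated X)"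
proof -
  \<comment> \<open>each case fixes the part sizes\<close>
  have X: "X = Var ` {..<m}"
    unfolding X_def by (rule xv_image)
  have XY: "X \<union> Y = Var ` {..<m + n}"
    unfolding X Y_def yv_image by (rule Var_image_lessThan_Un)
  have XYZ: "X \<union> Y \<union> Z = Var ` {..<m + n + p}"
    unfolding XY Z_def zv_image by (rule Var_image_lessThan_Un)
  have "2 \<le> m \<and> 2 \<le> n \<and> 2 \<le> p \<longrightarrow> I3 = ideal_generated ({2} \<union> X \<union> Y \<union> Z)"
    using tri_I3_K_mnp[of m n p] XYZ by (simp add: I3_def)
  moreover have "2 \<le> m \<and> 2 \<le> n \<and> p = 1 \<longrightarrow> I3 = ideal_generated (X \<union> Y \<union> {zv m n 1 + 2})"
    using tri_I3_K_mn1[of m n p] XY by (simp add: I3_def zv_def)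
  moreover have "3 \<le> m \<and> n = 1 \<and> p = 1 \<longrightarrow> I3 = ideal_generated (X \<union> {yv m 1 + zv m n 1 + 2})"
    using tri_I3_K_m11[of m n p] X by (auto simp: I3_def yv_def zv_def)
  moreover have "m = 2 \<and> n = 1 \<and> p = 1 \<longrightarrow> I3 = ideal_generated
      {xv 1 * xv 2 + xv 1 + xv 2, xv 1 * zv m n 1 + xv 1, xv 2 * zv m n 1 + xv 2, yv m 1 + zv m n 1 + 2}"
    using tri_I3_K_211[of m n p] by (auto simp: I3_def xv_def yv_def zv_def)
  moreover have "3 \<le> m \<and> 3 \<le> n \<and> p = 0 \<longrightarrow> I3 = ideal_generated (X \<union> Y)"
    using tri_I3_K_mn0[of m n p] XY by (simp add: I3_def)
  moreover have "3 \<le> m \<and> n = 2 \<and> p = 0 \<longrightarrow> I3 = ideal_generated (X \<union> {yv m 1 + yv m 2})"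
    using tri_I3_K_m20[of m n p] X by (simp add: I3_def yv_def)
  moreover have "m = 2 \<and> n = 2 \<and> p = 0 \<longrightarrow> I3 = ideal_generated
      {xv 2 * yv m 2, xv 1 + xv 2, yv m 1 + yv m 2}"
    using tri_I3_K_220[of m n p] by (auto simp: I3_def xv_def yv_def)
  moreover have "3 \<le> m \<and> n = 1 \<and> p = 0 \<longrightarrow> I3 = ideal_generated X"
    using tri_I3_K_m10[of m n p] X by (simp add: I3_def)
  ultimately show ?thesis
    by blast
qed

end
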